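(* Let $F\in\{\triangle_0,\mathcal{T}\mathbb{R}_0,\mathcal{T}\mathbb{C}_0,\mathcal{T}\triangle_0\}$. Define $H:F\times[0,1]\to F$ by $H(0,t)=0$ and $H(x,t)=x|x|^{-t}$ for $x\ne0$. Then $H$ is a hyperfield homotopy. Moreover $H_0$ is the identity and $H_1(x)=\operatorname{ph}(x)$.
   Context: Hyperfields. A hyperfield $(F,\odot,\boxplus,1,0)$ has the following data and axioms. - $\odot$ is a commutative multiplication and $\boxplus$ is a hyperaddition assigning to each $x,y$ a nonempty subset $x\boxplus y\subseteq F$ (extended to subsets by unions). - $\boxplus$ is commutative and associative, and $x\boxplus 0=\{x\}$. - Each $x$ has a unique $-x$ with $0\in x\boxplus(-x)$, and $x\in y\boxplus z \iff z\in x\boxplus(-y)$. - $(F\setminus\{0\},\odot,1)$ is an abelian group, $0\odot x=0$, and $x\odot(y\boxplus z)=(x\odot y)\boxplus(x\odot z)$. A homomorphism $h$ satisfies $h(0)=0$, $h(1)=1$, $h(xy)=h(x)h(y)$ and $h(x\boxplus y)\subseteq h(x)\boxplus h(y)$. Topological hyperfields. A topological hyperfield is a hyperfield with a topology in which $F\setminus\{0\}$ is open, multiplication is continuous, and inversion on $F^\times$ is continuous. If $T$ is the topology, the 0-coarse topology has as open sets $F$ together with all $U\in T$ with $0\notin U$. A hyperfield homotopy between topological hyperfields $F,F'$ is a continuous $H:F\times[0,1]\to F'$ such that each $H_t=H(\cdot,t)$ is a hyperfield homomorphism. The hyperfields in the claim all use the usual multiplication of $\mathbb{C}$. - $\triangle=\mathbb{R}_{\ge0}$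 with $a\boxplus b=[|a-b|,a+b]$. - $\mathcal{T}\triangle=\mathbb{R}_{\ge0}$ with $a\boxplus b=\{\max(a,b)\}$ if $a\ne b$, and $a\boxplus a=[0,a]$. - $\mathcal{T}\mathbb{R}=\mathbb{R}$ with $a\boxplus b=\{a\}$ if $|a|>|b|$ or $a=b$, and $a\boxplus(-a)=[-|a|,|a|]$. - $\mathcal{T}\mathbb{C}=\mathbb{C}$ with the following hyperaddition: $a\boxplus b=\{a\}$ if $|a|>|b|$; $a\boxplus(-a)$ is the closed disk $\{x:|x|\le|a|\}$; if $|a|=|b|$ and $b\ne-a$, then $a\boxplus b$ is the shortest closed arc from $a$ to $b$ on the circle of radius $|a|$ centered at $0$. The subscript $0$ means the 0-coarse topology derived from the usual Euclidean topology. $\operatorname{ph}(x)=x/|x|$ for $x\ne0$, and $\operatorname{ph}(0)=0$. *)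

theory Defs
  imports "HOL-Analysis.Analysis"
begin

text \<open>Concrete hyperfields whose multiplication is the ordinary multiplication of a
real normed field ('a = real or complex). A hyperfield is given by its carrier S
(a subset of 'a, containing 0 and 1, closed under multiplication) and its
hyperaddition hadd.\<close>

definition tri_add :: "real \<Rightarrow> real \<Rightarrow> real set" where
  "tri_add a b = {\<bar>a - b\<bar>..a + b}"

definition ttri_add :: "real \<Rightarrow> real \<Rightarrow> real set" where
  "ttri_add a b = (if a \<noteq> b then {max a b} else {0..a})"

definition tR_add :: "real \<Rightarrow> real \<Rightarrow> real set" where
  "tR_add a b =
     (if \<bar>a\<bar> > \<bar>b\<bar> \<or> a = b then {a}
      else if \<bar>b\<bar> > \<bar>a\<bar> then {b}
      else {- \<bar>a\<bar>..\<bar>a\<bar>})"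

text \<open>Shortest closed arc from a to b on the circle of radius norm a (when
norm a = norm b and b \<noteq> -a): the radial projection of the chord [a,b].\<close>
definition short_arc :: "complex \<Rightarrow> complex \<Rightarrow> complex set" where
  "short_arc a b = {complex_of_real (norm a) * sgn w | w. w \<in> closed_segment a b}"

definition tC_add :: "complex \<Rightarrow> complex \<Rightarrow> complex set" where
  "tC_add a b =
     (if norm a > norm b then {a}
      else if norm b > norm a then {b}
      else if b = - a then cball 0 (norm a)
      else short_arc a b)"

definition coarse0 :: "'a::real_normed_field set \<Rightarrow> 'a topology" where
  "coarse0 S = topology (\<lambda>U. U = S \<or> (openin (top_of_set S) U \<and> 0 \<notin> U))"

definition hf_hom ::
  "'a::real_normed_field set \<Rightarrow> ('a \<Rightarrow> 'a \<Rightarrow> 'a set) \<Rightarrow>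
   'b::real_normed_field set \<Rightarrow> ('b \<Rightarrow> 'b \<Rightarrow> 'b set) \<Rightarrow> ('a \<Rightarrow> 'b) \<Rightarrow> bool" where
  "hf_hom S hadd S' hadd' h \<longleftrightarrow>
     h ` S \<subseteq> S' \<and> h 0 = 0 \<and> h 1 = 1 \<and>
     (\<forall>x\<in>S. \<forall>y\<in>S. h (x * y) = h x * h y) \<and>
     (\<forall>x\<in>S. \<forall>y\<in>S. h ` (hadd x y) \<subseteq> hadd' (h x) (h y))"

definition hf_homotopy ::
  "'a::real_normed_field set \<Rightarrow> ('a \<Rightarrow> 'a \<Rightarrow> 'a set) \<Rightarrow>
   'b::real_normed_field set \<Rightarrow> ('b \<Rightarrow> 'b \<Rightarrow> 'b set) \<Rightarrow> ('a \<times> real \<Rightarrow> 'b) \<Rightarrow> bool" where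
  "hf_homotopy S hadd S' hadd' H \<longleftrightarrow>
     continuous_map (prod_topology (coarse0 S) (top_of_set {0..1})) (coarse0 S') H \<and>
     (\<forall>t\<in>{0..1}. hf_hom S hadd S' hadd' (\<lambda>x. H (x, t)))"

definition Hmap :: "'a::real_normed_field \<times> real \<Rightarrow> 'a" where
  "Hmap p = (let (x, t) = p in if x = 0 then 0 else x * of_real (norm x powr (- t)))"

definition ph :: "'a::real_normed_field \<Rightarrow> 'a" where
  "ph x = (if x = 0 then 0 else x / of_real (norm x))"

end

theory Submission
  imports Defs
begin

text \<open>For \<open>x \<noteq> 0\<close> we have \<open>H\<^sub>t x = ph x \<cdot> \<bar>x\<bar>\<^bsup>1-t\<^esup>\<close>: each \<open>H\<^sub>t\<close> is multiplicative, keeps phases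
and acts on moduli by \<open>r \<mapsto> r\<^bsup>1-t\<^esup>\<close>, which for \<open>0 \<le> t \<le> 1\<close> is monotone and subadditive. All
four hyperadditions are described by phases together with the order (or the triangle
inequality) on moduli, so each \<open>H\<^sub>t\<close> preserves them. Continuity is only needed away from 0:
in a 0-coarse topology the one open set containing 0 is the whole space, and \<open>H\<^sub>t\<close> fixes 0.\<close>

lemma openin_coarse0:
  "openin (coarse0 S) U \<longleftrightarrow> U = S \<or> (openin (top_of_set S) U \<and> 0 \<notin> U)"
proof -
  let ?P = "\<lambda>U. U = S \<or> (openin (top_of_set S) U \<and> 0 \<notin> U)"
  have sub: "?P U \<Longrightarrow> U \<subseteq> S" for U
    by (auto dest: openin_imp_subset)
  have "istopology ?P"
    unfolding istopology_def
  proof (intro conjI allI impI)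
    fix A B assume A: "?P A" and B: "?P B"
    then consider "A = S" | "B = S"
      | "openin (top_of_set S) A" "0 \<notin> A" "openin (top_of_set S) B" "0 \<notin> B"
      by blast
    then show "?P (A \<inter> B)"
    proof cases
      case 1
      then have "A \<inter> B = B" using sub[OF B] by blast
      then show ?thesis using B by simp
    next
      case 2
      then have "A \<inter> B = A" using sub[OF A] by blast
      then show ?thesis using A by simp
    qed (simp add: openin_Int)
  next
    fix K assume K: "\<forall>A\<in>K. ?P A"
    show "?P (\<Union>K)"
    proof (cases "S \<in> K")
      case True
      then have "\<Union>K = S" using K sub by blast
      then show ?thesis by blast
    qed (use K in auto)
  qed
  then show ?thesis unfolding coarse0_def by simp
qed

lemma topspace_coarse0 [simp]: "topspace (coarse0 S) = S"
  unfolding topspace_def openin_coarse0 using openin_imp_subset by auto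

lemma openin_punctured: "openin (top_of_set S) (S - {a :: 'a::t1_space})"
  by (metis Diff_eq closed_singleton open_Compl openin_open_Int)

lemma openin_coarse0_punctured: "openin (coarse0 S) (S - {0})"
  by (simp add: openin_coarse0 openin_punctured)

lemma subtopology_coarse0_punctured:
  "subtopology (coarse0 S) (S - {0}) = top_of_set (S - {0})"
proof -
  have "top_of_set (S - {0}) = subtopology (top_of_set S) (S - {0})"
    by (simp add: subtopology_subtopology Int_absorb1)
  then show ?thesis
    unfolding topology_eq
    by (auto simp: openin_open_subtopology[OF openin_punctured]
        openin_open_subtopology[OF openin_coarse0_punctured] openin_coarse0)
qed

lemma continuous_map_coarse0I:
  fixes H :: "'a::real_normed_field \<times> 'c::topological_space \<Rightarrow> 'b::real_normed_field"
  assumes maps: "\<And>x t. x \<in> S \<Longrightarrow> t \<in> T \<Longrightarrow> H (x, t) \<in> S'"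
    and zero: "\<And>t. t \<in> T \<Longrightarrow> H (0, t) = 0"
    and cont: "continuous_on ((S - {0}) \<times> T) H"
  shows "continuous_map (prod_topology (coarse0 S) (top_of_set T)) (coarse0 S') H"
  unfolding continuous_map_openin_preimage_eq
proof (intro conjI allI impI)
  let ?X = "prod_topology (coarse0 S) (top_of_set T)"
  let ?A = "(S - {0}) \<times> T"
  show "H \<in> topspace ?X \<rightarrow> topspace (coarse0 S')"
    using maps by auto
  fix U assume U: "openin (coarse0 S') U"
  show "openin ?X (topspace ?X \<inter> H -` U)"
  proof (cases "U = S'")
    case True
    then have "topspace ?X \<inter> H -` U = topspace ?X" using maps by auto
    then show ?thesis by (metis openin_topspace)
  next
    case False
    with U have U_open: "openin (top_of_set S') U" and "0 \<notin> U"
      by (auto simp: openin_coarse0)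
    then have preimage: "topspace ?X \<inter> H -` U = ?A \<inter> H -` U"
      using zero by auto
    have "openin (top_of_set ?A) (?A \<inter> H -` U)"
      by (rule continuous_openin_preimage[OF cont _ U_open]) (use maps in auto)
    moreover have "top_of_set ?A = subtopology ?X ?A"
      by (simp add: subtopology_Times subtopology_coarse0_punctured subtopology_subtopology)
    moreover have "openin ?X ?A"
      by (simp add: openin_prod_Times_iff openin_coarse0_punctured)
    ultimately show ?thesis
      unfolding preimage by (metis openin_trans_full)
  qed
qed

lemma Hmap_eq: "Hmap (x, t) = x * of_real (norm x powr - t)"
  by (simp add: Hmap_def)

lemma Hmap_eq_0_iff [simp]: "Hmap (x, t) = 0 \<longleftrightarrow> x = 0"
  by (simp add: Hmap_def)

lemma Hmap_one [simp]: "Hmap (1, t) = 1"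
  by (simp add: Hmap_eq)

lemma Hmap_mult: "Hmap (x * y, t) = Hmap (x, t) * Hmap (y, t)"
  by (simp add: Hmap_eq norm_mult powr_mult mult_ac)

lemma Hmap_minus: "Hmap (- x, t) = - Hmap (x, t)"
  by (simp add: Hmap_eq)

lemma norm_Hmap: "norm (Hmap (x, t)) = norm x powr (1 - t)"
proof (cases "x = 0")
  case False
  then have "norm (Hmap (x, t)) = norm x * norm x powr - t" by (simp add: Hmap_eq norm_mult)
  also have "\<dots> = norm x powr (1 - t)" using False by (simp add: powr_diff powr_minus divide_inverse)
  finally show ?thesis .
qed simp

lemma norm_Hmap_mono: "norm x \<le> norm y \<Longrightarrow> t \<le> 1 \<Longrightarrow> norm (Hmap (x, t)) \<le> norm (Hmap (y, t))"
  by (simp add: norm_Hmap powr_mono2)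

lemma Hmap_real_eq_powr: "0 \<le> (x::real) \<Longrightarrow> Hmap (x, t) = x powr (1 - t)"
  using norm_Hmap[of x t] by (simp add: Hmap_eq)

lemma Hmap_nonneg: "0 \<le> (x::real) \<Longrightarrow> 0 \<le> Hmap (x, t)"
  by (simp add: Hmap_real_eq_powr)

lemma Hmap_at_0: "Hmap (x, 0) = x"
  by (simp add: Hmap_eq)

lemma Hmap_at_1: "Hmap (x, 1) = ph x"
  by (simp add: Hmap_eq ph_def powr_minus divide_inverse)

lemma continuous_on_Hmap:
  assumes "0 \<notin> A"
  shows "continuous_on (A \<times> B) (Hmap :: 'a::real_normed_field \<times> real \<Rightarrow> 'a)"
proof -
  have "continuous_on (A \<times> B) (\<lambda>p. fst p * of_real (norm (fst p) powr - snd p) :: 'a)"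
    using assms by (intro continuous_intros) auto
  then show ?thesis
    by (rule continuous_on_cong[THEN iffD1, rotated 2]) (auto simp: Hmap_eq)
qed

lemma hf_homotopy_HmapI:
  fixes S :: "'a::real_normed_field set"
  assumes maps: "\<And>x t. x \<in> S \<Longrightarrow> t \<in> {0..1} \<Longrightarrow> Hmap (x, t) \<in> S"
    and hadd: "\<And>x y c t. x \<in> S \<Longrightarrow> y \<in> S \<Longrightarrow> t \<in> {0..1} \<Longrightarrow> c \<in> hadd x y \<Longrightarrow>
               Hmap (c, t) \<in> hadd (Hmap (x, t)) (Hmap (y, t))"
  shows "hf_homotopy S hadd S hadd Hmap"
  unfolding hf_homotopy_def hf_hom_def
proof (intro conjI ballI)
  show "continuous_map (prod_topology (coarse0 S) (top_of_set {0..1})) (coarse0 S) Hmap"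
    by (rule continuous_map_coarse0I) (auto intro: maps continuous_on_Hmap)
  fix t :: real assume "t \<in> {0..1}"
  then show "(\<lambda>x. Hmap (x, t)) ` S \<subseteq> S"
    and "\<And>x y. x \<in> S \<Longrightarrow> y \<in> S \<Longrightarrow> (\<lambda>x. Hmap (x, t)) ` hadd x y \<subseteq> hadd (Hmap (x, t)) (Hmap (y, t))"
    using maps hadd by auto
qed (simp_all add: Hmap_mult)

lemma powr_add_le:
  fixes x y s :: real
  assumes "0 \<le> x" "0 \<le> y" "0 \<le> s" "s \<le> 1"
  shows "(x + y) powr s \<le> x powr s + y powr s"
proof (cases "x = 0 \<or> y = 0 \<or> s = 0")
  case True
  then show ?thesis using assms by auto
next
  case False
  define z where "z = x + y"
  have pos: "0 < x" "0 < y" "0 < z" using False assms by (auto simp: z_def)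
  \<comment> \<open>\<open>u \<le> u powr s\<close> for \<open>u = x/z, y/z \<in> [0,1]\<close>, and these two fractions sum to 1\<close>
  have "x / z \<le> (x / z) powr s" "y / z \<le> (y / z) powr s"
    using pos assms powr_mono'[of s 1 "x / z"] powr_mono'[of s 1 "y / z"]
    by (auto simp: z_def)
  then have "z powr s * (x / z + y / z) \<le> z powr s * ((x / z) powr s + (y / z) powr s)"
    by (intro mult_left_mono) auto
  also have "\<dots> = x powr s + y powr s"
    using pos by (simp add: powr_divide distrib_left)
  also have "x / z + y / z = 1"
    using pos by (simp add: z_def add_divide_distrib[symmetric])
  finally show ?thesis by (simp add: z_def)
qed

lemma Hmap_mono_real: "0 \<le> (x::real) \<Longrightarrow> x \<le> y \<Longrightarrow> t \<le> 1 \<Longrightarrow> Hmap (x, t) \<le> Hmap (y, t)"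
  by (simp add: Hmap_real_eq_powr powr_mono2)

lemma Hmap_add_le_real:
  "0 \<le> (x::real) \<Longrightarrow> 0 \<le> y \<Longrightarrow> 0 \<le> t \<Longrightarrow> t \<le> 1 \<Longrightarrow> Hmap (x + y, t) \<le> Hmap (x, t) + Hmap (y, t)"
  by (simp add: Hmap_real_eq_powr powr_add_le)

lemma tri_add_image_mono_subadditive:
  fixes f :: "real \<Rightarrow> real"
  assumes mono: "\<And>x y. 0 \<le> x \<Longrightarrow> x \<le> y \<Longrightarrow> f x \<le> f y"
    and subadd: "\<And>x y. 0 \<le> x \<Longrightarrow> 0 \<le> y \<Longrightarrow> f (x + y) \<le> f x + f y"
    and ab: "0 \<le> a" "0 \<le> b" and c: "c \<in> tri_add a b"
  shows "f c \<in> tri_add (f a) (f b)"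
proof -
  have c_bounds: "\<bar>a - b\<bar> \<le> c" "c \<le> a + b" using c by (auto simp: tri_add_def)
  then have "0 \<le> c" by linarith
  have "f c \<le> f a + f b"
    using mono[OF \<open>0 \<le> c\<close> c_bounds(2)] subadd[OF ab] by linarith
  moreover have "f a \<le> f c + f b"
    using mono[of a "c + b"] subadd[OF \<open>0 \<le> c\<close> ab(2)] c_bounds ab by linarith
  moreover have "f b \<le> f c + f a"
    using mono[of b "c + a"] subadd[OF \<open>0 \<le> c\<close> ab(1)] c_bounds ab by linarith
  ultimately show ?thesis by (auto simp: tri_add_def)
qed

lemma ttri_add_image_mono:
  fixes f :: "real \<Rightarrow> real"
  assumes mono: "\<And>x y. 0 \<le> x \<Longrightarrow> x \<le> y \<Longrightarrow> f x \<le> f y"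
    and nonneg: "\<And>x. 0 \<le> x \<Longrightarrow> 0 \<le> f x"
    and ab: "0 \<le> a" "0 \<le> b" and c: "c \<in> ttri_add a b"
  shows "f c \<in> ttri_add (f a) (f b)"
proof (cases "a = b")
  case True
  then have "0 \<le> c" "c \<le> a" using c by (auto simp: ttri_add_def)
  then show ?thesis
    using True mono[of c a] nonneg[of c] by (auto simp: ttri_add_def)
next
  case False
  then have "c = max a b" using c by (auto simp: ttri_add_def)
  then have "f c = max (f a) (f b)"
    using mono[of a b] mono[of b a] ab by (auto simp: max_def)
  then show ?thesis using nonneg[OF ab(1)] nonneg[OF ab(2)] by (auto simp: ttri_add_def max_def)
qed

lemma Hmap_tri_add:
  assumes "t \<in> {0..1}" "0 \<le> a" "0 \<le> b" "c \<in> tri_add a b"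
  shows "Hmap (c, t) \<in> tri_add (Hmap (a, t)) (Hmap (b, t))"
proof (rule tri_add_image_mono_subadditive[where f = "\<lambda>x. Hmap (x, t)", OF _ _ assms(2-4)])
  show "Hmap (x, t) \<le> Hmap (y, t)" if "0 \<le> x" "x \<le> y" for x y :: real
    using that assms(1) by (intro Hmap_mono_real) auto
  show "Hmap (x + y, t) \<le> Hmap (x, t) + Hmap (y, t)" if "0 \<le> x" "0 \<le> y" for x y :: real
    using that assms(1) by (intro Hmap_add_le_real) auto
qed

lemma Hmap_ttri_add:
  assumes "t \<le> 1" "0 \<le> a" "0 \<le> b" "c \<in> ttri_add a b"
  shows "Hmap (c, t) \<in> ttri_add (Hmap (a, t)) (Hmap (b, t))"
proof (rule ttri_add_image_mono[where f = "\<lambda>x. Hmap (x, t)", OF _ _ assms(2-4)])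
  show "Hmap (x, t) \<le> Hmap (y, t)" if "0 \<le> x" "x \<le> y" for x y :: real
    using that assms(1) by (intro Hmap_mono_real) auto
qed (rule Hmap_nonneg)

lemma tR_add_left: "\<bar>b\<bar> \<le> \<bar>a\<bar> \<Longrightarrow> a \<in> tR_add a b"
  by (auto simp: tR_add_def)

lemma tR_add_right: "\<bar>a\<bar> \<le> \<bar>b\<bar> \<Longrightarrow> b \<in> tR_add a b"
  by (auto simp: tR_add_def)

lemma Hmap_tR_add:
  assumes t: "t \<le> 1" and c: "c \<in> tR_add a b"
  shows "Hmap (c, t) \<in> tR_add (Hmap (a, t)) (Hmap (b, t))"
proof -
  have mono: "\<bar>Hmap (x, t)\<bar> \<le> \<bar>Hmap (y, t)\<bar>" if "\<bar>x\<bar> \<le> \<bar>y\<bar>" for x y :: real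
    using norm_Hmap_mono[of x y t] that t by simp
  consider "\<bar>b\<bar> < \<bar>a\<bar> \<or> a = b" | "\<bar>a\<bar> < \<bar>b\<bar>" | "b = - a" "a \<noteq> 0"
    by linarith
  then show ?thesis
  proof cases
    case 1
    then have "c = a" using c by (auto simp: tR_add_def)
    then show ?thesis using 1 mono[of b a] by (auto intro!: tR_add_left)
  next
    case 2
    then have "c = b" using c by (auto simp: tR_add_def split: if_splits)
    then show ?thesis using 2 mono[of a b] by (auto intro!: tR_add_right)
  next
    case 3
    then have "\<bar>c\<bar> \<le> \<bar>a\<bar>" using c by (auto simp: tR_add_def)
    moreover have "tR_add (Hmap (a, t)) (Hmap (b, t)) = {- \<bar>Hmap (a, t)\<bar>..\<bar>Hmap (a, t)\<bar>}"
      using 3 by (simp add: tR_add_def Hmap_minus)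
    ultimately show ?thesis using mono[of c a] by (auto simp: abs_le_iff)
  qed
qed

lemma norm_short_arc: "c \<in> short_arc a b \<Longrightarrow> c = 0 \<or> norm c = norm a"
  by (auto simp: short_arc_def norm_mult norm_sgn split: if_splits)

lemma short_arc_scale:
  assumes "0 < k" and "c \<in> short_arc a b"
  shows "of_real k * c \<in> short_arc (of_real k * a) (of_real k * b)"
proof -
  obtain w where w: "w \<in> closed_segment a b" and c_eq: "c = of_real (norm a) * sgn w"
    using assms(2) by (auto simp: short_arc_def)
  have "closed_segment (of_real k * a) (of_real k * b) = (\<lambda>z. of_real k * z) ` closed_segment a b"
    by (rule closed_segment_linear_image) (rule linear_times)
  then have "of_real k * w \<in> closed_segment (of_real k * a) (of_real k * b)"
    using w by blast
  moreover have "of_real k * c = of_real (norm (of_real k * a)) * sgn (of_real k * w)"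
    using assms(1) by (simp add: c_eq norm_mult sgn_mult sgn_of_real)
  ultimately show ?thesis by (auto simp: short_arc_def)
qed

lemma of_real_norm_mult_sgn: "of_real (norm u) * sgn u = (u::'a::real_normed_field)"
  by (cases "u = 0") (simp_all add: sgn_div_norm scaleR_conv_of_real)

lemma tC_add_left: "norm b \<le> norm a \<Longrightarrow> a \<in> tC_add a b"
  by (auto simp: tC_add_def short_arc_def of_real_norm_mult_sgn intro!: exI[of _ a])

lemma tC_add_right: "norm a \<le> norm b \<Longrightarrow> b \<in> tC_add a b"
  by (auto simp: tC_add_def short_arc_def of_real_norm_mult_sgn intro!: exI[of _ b])

lemma Hmap_tC_add:
  assumes t: "t \<le> 1" and c: "c \<in> tC_add a b"
  shows "Hmap (c, t) \<in> tC_add (Hmap (a, t)) (Hmap (b, t))"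
proof -
  note mono = norm_Hmap_mono[OF _ t]
  consider "norm b < norm a" | "norm a < norm b" | "norm a = norm b" "b = - a"
    | "norm a = norm b" "b \<noteq> - a" by linarith
  then show ?thesis
  proof cases
    case 1
    then have "c = a" using c by (auto simp: tC_add_def)
    then show ?thesis using 1 mono[of b a] by (auto intro!: tC_add_left)
  next
    case 2
    then have "c = b" using c by (auto simp: tC_add_def)
    then show ?thesis using 2 mono[of a b] by (auto intro!: tC_add_right)
  next
    case 3
    then have "norm c \<le> norm a" using c by (auto simp: tC_add_def)
    moreover have "tC_add (Hmap (a, t)) (Hmap (b, t)) = cball 0 (norm (Hmap (a, t)))"
      using 3 by (simp add: tC_add_def Hmap_minus)
    ultimately show ?thesis using mono[of c a] by simp
  next
    case 4
    \<comment> \<open>on the circle \<open>\<bar>z\<bar> = \<bar>a\<bar>\<close> the map \<open>H\<^sub>t\<close> is multiplication by the constant \<open>k\<close>\<close>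
    define k where "k = norm a powr - t"
    have "a \<noteq> 0" using 4 by auto
    then have "0 < k" by (simp add: k_def)
    have scale: "Hmap (z, t) = of_real k * z" if "z = 0 \<or> norm z = norm a" for z :: complex
      using that by (auto simp: Hmap_eq k_def)
    have "c \<in> short_arc a b" using 4 c by (simp add: tC_add_def)
    then have "Hmap (c, t) \<in> short_arc (of_real k * a) (of_real k * b)"
      using scale[OF norm_short_arc] short_arc_scale[OF \<open>0 < k\<close>] by simp
    moreover have "Hmap (a, t) = of_real k * a" "Hmap (b, t) = of_real k * b"
      using 4 scale by auto
    moreover have "of_real k * b \<noteq> - (of_real k * a)"
      using 4 \<open>0 < k\<close> by (metis minus_mult_right mult_cancel_left of_real_eq_0_iff order_less_irrefl)
    moreover have "norm (of_real k * b) = norm (of_real k * a)"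
      using 4 by (simp add: norm_mult)
    ultimately show ?thesis by (simp add: tC_add_def)
  qed
qed

theorem proposition2p1:
  shows
    "(hf_homotopy {0::real..} tri_add {0..} tri_add Hmap \<and>
        (\<forall>x\<in>{0::real..}. Hmap (x, 0) = x \<and> Hmap (x, 1) = ph x)) \<and>
     (hf_homotopy (UNIV::real set) tR_add UNIV tR_add Hmap \<and>
        (\<forall>x::real. Hmap (x, 0) = x \<and> Hmap (x, 1) = ph x)) \<and>
     (hf_homotopy (UNIV::complex set) tC_add UNIV tC_add Hmap \<and>
        (\<forall>x::complex. Hmap (x, 0) = x \<and> Hmap (x, 1) = ph x)) \<and>
     (hf_homotopy {0::real..} ttri_add {0..} ttri_add Hmap \<and>
        (\<forall>x\<in>{0::real..}. Hmap (x, 0) = x \<and> Hmap (x, 1) = ph x))"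
proof (intro conjI ballI allI)
  show "hf_homotopy {0::real..} tri_add {0..} tri_add Hmap"
    by (rule hf_homotopy_HmapI) (simp_all add: Hmap_nonneg Hmap_tri_add)
  show "hf_homotopy {0::real..} ttri_add {0..} ttri_add Hmap"
    by (rule hf_homotopy_HmapI) (simp_all add: Hmap_nonneg Hmap_ttri_add)
  show "hf_homotopy (UNIV::real set) tR_add UNIV tR_add Hmap"
    by (rule hf_homotopy_HmapI) (simp_all add: Hmap_tR_add)
  show "hf_homotopy (UNIV::complex set) tC_add UNIV tC_add Hmap"
    by (rule hf_homotopy_HmapI) (simp_all add: Hmap_tC_add)
qed (simp_all add: Hmap_at_0 Hmap_at_1)

end
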